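(* The following are equivalent: (i) $\lim_{d\to\infty} n^{X_d}(\varepsilon)=\infty$ for every $\varepsilon\in(0,1)$; (ii) $\lim_{d\to\infty}\bar\lambda^{X_d}_1=0$.
   Context: For each $d\in\mathbb N$, $X_d$ is a random element of a separable Hilbert space $H_d$ with $\mathbb E X_d=0$ and $\mathbb E\|X_d\|_{H_d}^2<\infty$. For a centered Hilbert-space random element $Z$ with finite second moment, $\lambda^Z_1\ge\lambda^Z_2\ge\dots\ge 0$ denote the eigenvalues of its covariance operator $K^Z$ listed with multiplicity (padded with zeros if there are finitely many), $\Lambda^Z=\sum_k\lambda^Z_k=\mathbb E\|Z\|^2$, and $\bar\lambda^Z_k=\lambda^Z_k/\Lambda^Z$. It is assumed that $\lambda^{X_d}_1>0$ for all $d$. The average case approximation complexity is $n^{X_d}(\varepsilon)=\min\{n\in\mathbb N: e^{X_d}(n)\le \varepsilon\, e^{X_d}(0)\}$ for $\varepsilon\in(0,1)$, where $e^{X_d}(0)=(\mathbb E\|X_d\|^2)^{1/2}$ and $e^{X_d}(n)$ is the infimum of $(\mathbb E\|X_d-\sum_{m=1}^n l_m(X_d)\psi_m\|^2)^{1/2}$ over all $\psi_m\in H_d$, $l_m\in H_d^*$; equivalently $n^{X_d}(\varepsilon)=\min\{n\in\mathbb N:\ \sum_{k>n}\bar\lambda^{X_d}_k\le\varepsilon^2\}=\min\{n\in\mathbb N:\sum_{k=1}^n\bar\lambda^{X_d}_k\ge 1-\varepsilon^2\}$. *)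

theory Defs
  imports "HOL-Analysis.Analysis"
begin

text \<open>The statement depends on the random elements X_d only through the
  eigenvalue sequences of their covariance operators. An eigenvalue sequence
  (listed with multiplicity, non-increasing, padded with zeros) is modelled as
  a function nat => real; index 0 corresponds to lambda_1 of the paper.\<close>

definition eigen_seq :: "(nat \<Rightarrow> real) \<Rightarrow> bool" where
  "eigen_seq l \<longleftrightarrow> (\<forall>k. 0 \<le> l k) \<and> antimono l \<and> summable l \<and> 0 < l 0"

text \<open>Lambda = sum of all eigenvalues = E ||X||^2.\<close>
definition total_var :: "(nat \<Rightarrow> real) \<Rightarrow> real" where
  "total_var l = (\<Sum>k. l k)"

definition norm_eig :: "(nat \<Rightarrow> real) \<Rightarrow> nat \<Rightarrow> real" where
  "norm_eig l k = l k / total_var l"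

text \<open>Average case approximation complexity
  n(eps) = min { n : sum_{k > n} lambda-bar_k <= eps^2 }
  (with 1-based indexing of the paper; here the tail after the first n
  eigenvalues is indices k >= n).\<close>
definition avg_complexity :: "(nat \<Rightarrow> real) \<Rightarrow> real \<Rightarrow> nat" where
  "avg_complexity l \<epsilon> = (LEAST n. (\<Sum>k. norm_eig l (k + n)) \<le> \<epsilon>\<^sup>2)"

end

theory Submission
  imports Defs
begin

text \<open>The normalized eigenvalues are non-increasing and sum to 1, so the tail after the
  first n of them is 1 minus their partial sum, and this partial sum is at least the
  first normalized eigenvalue (for n \<ge> 1) and at most n times it. Hence n(eps) \<le> 1 as
  soon as the first normalized eigenvalue reaches 1 - eps^2, which gives (i) \<Longrightarrow> (ii),
  while n(eps) is always at least (1 - eps^2) divided by it, which gives (ii) \<Longrightarrow> (i).\<close>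

lemma eigen_seq_total_var_pos:
  assumes "eigen_seq l"
  shows "0 < total_var l"
proof -
  have "l 0 \<le> total_var l"
    using assms sum_le_suminf[of l "{0}"] by (auto simp: eigen_seq_def total_var_def)
  with assms show ?thesis
    by (simp add: eigen_seq_def)
qed

lemma norm_eig_sums_one:
  assumes "summable l" "total_var l \<noteq> 0"
  shows "norm_eig l sums 1"
  using sums_divide[OF summable_sums[OF assms(1)], of "total_var l"] assms(2)
  unfolding norm_eig_def total_var_def by simp

lemma norm_eig_tail:
  assumes "summable l" "total_var l \<noteq> 0"
  shows "(\<Sum>k. norm_eig l (k + n)) = 1 - (\<Sum>k<n. norm_eig l k)"
  using norm_eig_sums_one[OF assms] suminf_split_initial_segment[of "norm_eig l" n]
  by (simp add: sums_iff)

lemma norm_eig_first_pos: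
  assumes "eigen_seq l"
  shows "0 < norm_eig l 0"
  using assms eigen_seq_total_var_pos[OF assms] by (simp add: eigen_seq_def norm_eig_def)

lemma norm_eig_le_first:
  assumes "eigen_seq l"
  shows "norm_eig l k \<le> norm_eig l 0"
  using assms eigen_seq_total_var_pos[OF assms]
  by (simp add: eigen_seq_def norm_eig_def antimonoD divide_right_mono)

lemma avg_complexity_tail_le:
  assumes "summable l" "total_var l \<noteq> 0" "e \<noteq> 0"
  shows "(\<Sum>k. norm_eig l (k + avg_complexity l e)) \<le> e\<^sup>2"
proof -
  have "(\<lambda>n. \<Sum>k<n. norm_eig l k) \<longlonglongrightarrow> 1"
    using norm_eig_sums_one[OF assms(1,2)] by (simp add: sums_def)
  moreover have "1 - e\<^sup>2 < 1"
    using assms(3) by simp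
  ultimately have "\<forall>\<^sub>F n in sequentially. 1 - e\<^sup>2 < (\<Sum>k<n. norm_eig l k)"
    by (rule order_tendstoD)
  then obtain n where "1 - e\<^sup>2 < (\<Sum>k<n. norm_eig l k)"
    by (meson eventually_sequentially order_refl)
  then have "\<exists>n. (\<Sum>k. norm_eig l (k + n)) \<le> e\<^sup>2"
    using norm_eig_tail[OF assms(1,2), of n] by (intro exI[of _ n]) linarith
  then show ?thesis
    unfolding avg_complexity_def by (rule LeastI_ex)
qed

lemma avg_complexity_le_one:
  assumes "summable l" "total_var l \<noteq> 0" "1 - e\<^sup>2 \<le> norm_eig l 0"
  shows "avg_complexity l e \<le> 1"
  unfolding avg_complexity_def
  by (rule Least_le) (use assms norm_eig_tail[OF assms(1,2), of 1] in simp)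

lemma avg_complexity_lower_bound:
  assumes "eigen_seq l" "e \<noteq> 0"
  shows "1 - e\<^sup>2 \<le> real (avg_complexity l e) * norm_eig l 0"
proof -
  have l: "summable l" "total_var l \<noteq> 0"
    using assms(1) eigen_seq_total_var_pos[OF assms(1)] by (auto simp: eigen_seq_def)
  have "1 - e\<^sup>2 \<le> (\<Sum>k<avg_complexity l e. norm_eig l k)"
    using avg_complexity_tail_le[OF l assms(2)] norm_eig_tail[OF l] by simp
  also have "\<dots> \<le> (\<Sum>k<avg_complexity l e. norm_eig l 0)"
    by (intro sum_mono norm_eig_le_first[OF assms(1)])
  finally show ?thesis
    by simp
qed

lemma norm_eig_first_tendsto_zero_if_avg_complexity_at_top:
  assumes "\<And>d. eigen_seq (lam d)"
    and "\<And>e. 0 < e \<Longrightarrow> e < 1 \<Longrightarrow> filterlim (\<lambda>d. avg_complexity (lam d) e) at_top F"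
  shows "((\<lambda>d. norm_eig (lam d) 0) \<longlongrightarrow> 0) F"
proof (rule order_tendstoI)
  fix a :: real
  assume "a < 0"
  then have "a < norm_eig (lam d) 0" for d
    using norm_eig_first_pos[OF assms(1), of d] by linarith
  then show "\<forall>\<^sub>F d in F. a < norm_eig (lam d) 0"
    by simp
next
  fix a :: real
  assume "0 < a"
  define c where "c = min a (1/2)"
  define e where "e = sqrt (1 - c)"
  have c: "0 < c" "c \<le> a" "c < 1"
    using \<open>0 < a\<close> by (auto simp: c_def)
  then have e: "0 < e" "e < 1" "e\<^sup>2 = 1 - c"
    by (auto simp: e_def)
  have "\<forall>\<^sub>F d in F. 2 \<le> avg_complexity (lam d) e"
    using assms(2)[OF e(1,2)] by (simp add: filterlim_at_top)
  then show "\<forall>\<^sub>F d in F. norm_eig (lam d) 0 < a"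
  proof (rule eventually_mono)
    fix d
    assume "2 \<le> avg_complexity (lam d) e"
    then have "\<not> avg_complexity (lam d) e \<le> 1"
      by simp
    moreover have "summable (lam d)"
      using assms(1)[of d] by (simp add: eigen_seq_def)
    moreover have "total_var (lam d) \<noteq> 0"
      using eigen_seq_total_var_pos[OF assms(1)[of d]] by simp
    ultimately have "norm_eig (lam d) 0 < 1 - e\<^sup>2"
      using avg_complexity_le_one[of "lam d" e] by force
    then show "norm_eig (lam d) 0 < a"
      using e(3) c(2) by simp
  qed
qed

lemma avg_complexity_at_top_if_norm_eig_first_tendsto_zero:
  fixes lam :: "'a \<Rightarrow> nat \<Rightarrow> real" and e :: real
  assumes "\<And>d. eigen_seq (lam d)"
    and "((\<lambda>d. norm_eig (lam d) 0) \<longlongrightarrow> 0) F" "0 < e" "e < 1"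
  shows "filterlim (\<lambda>d. avg_complexity (lam d) e) at_top F"
proof -
  have "0 < 1 - e\<^sup>2"
    using assms(3,4) by (simp add: power_less_one_iff)
  moreover have "\<forall>\<^sub>F d in F. 0 < norm_eig (lam d) 0"
    using norm_eig_first_pos[OF assms(1)] by simp
  ultimately have "LIM d F. (1 - e\<^sup>2) / norm_eig (lam d) 0 :> at_top"
    using LIM_at_top_divide[OF tendsto_const _ assms(2)] by blast
  moreover have "\<forall>\<^sub>F d in F. (1 - e\<^sup>2) / norm_eig (lam d) 0 \<le> real (avg_complexity (lam d) e)"
  proof (intro always_eventually allI)
    fix d
    show "(1 - e\<^sup>2) / norm_eig (lam d) 0 \<le> real (avg_complexity (lam d) e)"
      using avg_complexity_lower_bound[OF assms(1)[of d], of e] norm_eig_first_pos[OF assms(1), of d]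
        assms(3) by (simp add: divide_le_eq)
  qed
  ultimately have "LIM d F. real (avg_complexity (lam d) e) :> at_top"
    by (rule filterlim_at_top_mono)
  then show ?thesis
    by (simp add: filterlim_sequentially_iff_filterlim_real)
qed

theorem proposition1:
  fixes lam :: "nat \<Rightarrow> nat \<Rightarrow> real"
  assumes "\<And>d. eigen_seq (lam d)"
  shows "(\<forall>\<epsilon>::real. 0 < \<epsilon> \<and> \<epsilon> < 1 \<longrightarrow>
            filterlim (\<lambda>d. avg_complexity (lam d) \<epsilon>) at_top sequentially)
         \<longleftrightarrow> ((\<lambda>d. norm_eig (lam d) 0) \<longlonglongrightarrow> 0)"
proof
  assume "\<forall>\<epsilon>::real. 0 < \<epsilon> \<and> \<epsilon> < 1 \<longrightarrow>
            filterlim (\<lambda>d. avg_complexity (lam d) \<epsilon>) at_top sequentially"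
  then show "(\<lambda>d. norm_eig (lam d) 0) \<longlonglongrightarrow> 0"
    by (intro norm_eig_first_tendsto_zero_if_avg_complexity_at_top[of lam, OF assms]) simp
next
  assume "(\<lambda>d. norm_eig (lam d) 0) \<longlonglongrightarrow> 0"
  then show "\<forall>\<epsilon>::real. 0 < \<epsilon> \<and> \<epsilon> < 1 \<longrightarrow>
            filterlim (\<lambda>d. avg_complexity (lam d) \<epsilon>) at_top sequentially"
    using avg_complexity_at_top_if_norm_eig_first_tendsto_zero[of lam, OF assms] by simp
qed

end
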